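(* Let $n\ge3$, let $\boldsymbol\ell=(\ell_1,\ldots,\ell_n)$ be positive lengths, let $\mu\in\mathbb{R}$, and let $\tau$ and $N>0$ be smooth functions on $T^n$ depending only on $s^1$. Consider the conformal data set $(g_{\boldsymbol\ell},\mu\,\sigma^\flat_{\boldsymbol\ell},\tau,N)$. Let $$\tau^*=\frac{\int_{S^1}N\tau\,ds}{\int_{S^1}N\,ds},\qquad \xi=\tau-\tau^*.$$ (1) If $\mu$ and $\tau^*$ are nonzero and have the same sign, then there is a solution $(\phi,W)$ of the CTS-H equations with $\phi\equiv c=(\mu/\tau^* )^{1/q}$, where $W$ is parallel to $\partial_{s^1}$ and $\frac{1}{2N}\mathcal{L}_{g_{\boldsymbol\ell}}W=c^q\xi\,\sigma^\flat_{\boldsymbol\ell}$. The solution of the constraint equations generated by it is $$\bar g=g_{r\boldsymbol\ell},\qquad \bar K=\tau\,(r\ell_1)^2(ds^1)^2,\qquad r=c^{(q-2)/2}=(\mu/\tau^* )^{1/n}.$$ (2) If $\mu=0$ and $\tau^*=0$, then for every $c>0$ there is a solution $(\phi,W)$ of the CTS-H equations with $\phi\equiv c$ and $\frac{1}{2N}\mathcal{L}_{g_{\boldsymbol\ell}}W=c^q\xi\,\sigma^\flat_{\boldsymbol\ell}$, and the associated solution of the constraint equations is $\bar g=g_{r\boldsymbol\ell}$, $\bar K=\tau\,(r\ell_1)^2(ds^1)^2$ with $r=c^{(q-2)/2}$.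
   Context: Let $q=\frac{2n}{n-2}$, $\kappa=\frac{n-1}{n}$. $S^1=\mathbb{R}/\mathbb{Z}$ with unit coordinate $s$ ($\int_{S^1}ds=1$); $T^n=(S^1)^n$ with unit coordinates $(s^1,\ldots,s^n)$; functions of $s^1$ only are identified with functions on $S^1$. $g_{\boldsymbol\ell}=\sum_k\ell_k^2(ds^k)^2$, and $r\boldsymbol\ell=(r\ell_1,\ldots,r\ell_n)$. $\sigma^\flat_{\boldsymbol\ell}=\kappa\ell_1^2(ds^1)^2-\frac1n\sum_{k\ge2}\ell_k^2(ds^k)^2$ (transverse-traceless for $g_{\boldsymbol\ell}$). The conformal Killing operator is $\mathcal{L}_gW=L_Wg-\frac2n(\mathrm{div}_gW)g$. CTS-H method: given $(g,\sigma,\tau,N)$ ($\sigma$ transverse-traceless, $N>0$ a densitized lapse), the CTS-H equations for $\phi>0$ and a vector field $W$ are $$-2\kappa q\Delta_g\phi+R_g\phi-\Big|\sigma+\tfrac{1}{2N}\mathcal{L}_gW\Big|_g^2\phi^{-q-1}+\kappa\tau^2\phi^{q-1}=0,\qquad \mathrm{div}_g\Big(\tfrac{1}{2N}\mathcal{L}_gW\Big)=\kappa\phi^q d\tau,$$ and a solution generates the solution $\bar g=\phi^{q-2}g$, $\bar K=\phi^{-2}(\sigma+\frac{1}{2N}\mathcal{L}_gW)+\frac{\tau}{n}\bar g$ of the Einstein constraint equations $R_{\bar g}-|\bar K|^2+(\mathrm{tr}\bar K)^2=0$, $\mathrm{div}_{\bar g}\bar K=d\,\mathrm{tr}_{\bar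 g}\bar K$. *)

theory Defs
  imports "HOL-Analysis.Analysis"
begin

text \<open>The torus T^n = (S^1)^n with unit coordinates is modelled by
  real^'n (coordinates s^k = x $ k, k :: 'n, n = CARD('n)); functions on T^n are
  functions on real^'n that are 1-periodic in every coordinate. The distinguished
  coordinate s^1 is an arbitrary fixed index j0 :: 'n. Functions on S^1 are 1-periodic
  functions real => real. Symmetric 2-tensor fields are given by their components
  T x i j in the global coordinates s, vector fields W by components W x $ k
  (coefficients of d/ds^k).\<close>

definition qn :: "nat \<Rightarrow> real" where "qn n = 2 * real n / (real n - 2)"
definition kap :: "nat \<Rightarrow> real" where "kap n = (real n - 1) / real n"

definition pd :: "'n::finite \<Rightarrow> (real^'n \<Rightarrow> real) \<Rightarrow> real^'n \<Rightarrow> real" where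
  "pd k f x = deriv (\<lambda>h. f (x + h *\<^sub>R axis k 1)) 0"

definition smooth_S1 :: "(real \<Rightarrow> real) \<Rightarrow> bool" where
  "smooth_S1 f \<longleftrightarrow> (\<forall>k x. (deriv ^^ k) f differentiable (at x))"

definition periodic_S1 :: "(real \<Rightarrow> real) \<Rightarrow> bool" where
  "periodic_S1 f \<longleftrightarrow> (\<forall>x. f (x + 1) = f x)"

definition smooth_Tn :: "(real^'n::finite \<Rightarrow> real) \<Rightarrow> bool" where
  "smooth_Tn f \<longleftrightarrow> (\<forall>ks::'n list. continuous_on UNIV (foldr pd ks f) \<and>
      (\<forall>k x. (\<lambda>h. foldr pd ks f (x + h *\<^sub>R axis k 1)) differentiable (at 0)))"

definition periodic_Tn :: "(real^'n::finite \<Rightarrow> real) \<Rightarrow> bool" where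
  "periodic_Tn f \<longleftrightarrow> (\<forall>x k. f (x + axis k 1) = f x)"

type_synonym 'n tensor2 = "real^'n \<Rightarrow> 'n \<Rightarrow> 'n \<Rightarrow> real"
type_synonym 'n vfield = "real^'n \<Rightarrow> real^'n"

definition ginv :: "'n::finite tensor2 \<Rightarrow> real^'n \<Rightarrow> 'n \<Rightarrow> 'n \<Rightarrow> real" where
  "ginv g x i j = matrix_inv (\<chi> a b. g x a b) $ i $ j"

definition chr :: "'n::finite tensor2 \<Rightarrow> real^'n \<Rightarrow> 'n \<Rightarrow> 'n \<Rightarrow> 'n \<Rightarrow> real" where
  "chr g x k i j = 1/2 * (\<Sum>l\<in>UNIV. ginv g x k l *
      (pd i (\<lambda>y. g y j l) x + pd j (\<lambda>y. g y i l) x - pd l (\<lambda>y. g y i j) x))"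

definition ricci :: "'n::finite tensor2 \<Rightarrow> 'n tensor2" where
  "ricci g x i j = (\<Sum>k\<in>UNIV. pd k (\<lambda>y. chr g y k i j) x - pd j (\<lambda>y. chr g y k i k) x
      + (\<Sum>l\<in>UNIV. chr g x k k l * chr g x l i j - chr g x k j l * chr g x l i k))"

definition scal :: "'n::finite tensor2 \<Rightarrow> real^'n \<Rightarrow> real" where
  "scal g x = (\<Sum>i\<in>UNIV. \<Sum>j\<in>UNIV. ginv g x i j * ricci g x i j)"

definition lap :: "'n::finite tensor2 \<Rightarrow> (real^'n \<Rightarrow> real) \<Rightarrow> real^'n \<Rightarrow> real" where
  "lap g f x = (\<Sum>i\<in>UNIV. \<Sum>j\<in>UNIV. ginv g x i j *
      (pd i (pd j f) x - (\<Sum>k\<in>UNIV. chr g x k i j * pd k f x)))"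

definition covW :: "'n::finite tensor2 \<Rightarrow> 'n vfield \<Rightarrow> real^'n \<Rightarrow> 'n \<Rightarrow> 'n \<Rightarrow> real" where
  "covW g W x i k = pd i (\<lambda>y. W y $ k) x + (\<Sum>j\<in>UNIV. chr g x k i j * W x $ j)"

definition lieg :: "'n::finite tensor2 \<Rightarrow> 'n vfield \<Rightarrow> 'n tensor2" where
  "lieg g W x i j = (\<Sum>k\<in>UNIV. g x j k * covW g W x i k + g x i k * covW g W x j k)"

definition divV :: "'n::finite tensor2 \<Rightarrow> 'n vfield \<Rightarrow> real^'n \<Rightarrow> real" where
  "divV g W x = (\<Sum>i\<in>UNIV. covW g W x i i)"

definition ckill :: "'n::finite tensor2 \<Rightarrow> 'n vfield \<Rightarrow> 'n tensor2" where
  "ckill g W x i j = lieg g W x i j - 2 / real CARD('n) * divV g W x * g x i j"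

definition covT :: "'n::finite tensor2 \<Rightarrow> 'n tensor2 \<Rightarrow> real^'n \<Rightarrow> 'n \<Rightarrow> 'n \<Rightarrow> 'n \<Rightarrow> real" where
  "covT g A x i k j = pd i (\<lambda>y. A y k j) x - (\<Sum>l\<in>UNIV. chr g x l i k * A x l j)
      - (\<Sum>l\<in>UNIV. chr g x l i j * A x k l)"

definition divT :: "'n::finite tensor2 \<Rightarrow> 'n tensor2 \<Rightarrow> real^'n \<Rightarrow> 'n \<Rightarrow> real" where
  "divT g A x j = (\<Sum>i\<in>UNIV. \<Sum>k\<in>UNIV. ginv g x i k * covT g A x i k j)"

definition normsq :: "'n::finite tensor2 \<Rightarrow> 'n tensor2 \<Rightarrow> real^'n \<Rightarrow> real" where
  "normsq g A x = (\<Sum>i\<in>UNIV. \<Sum>j\<in>UNIV. \<Sum>k\<in>UNIV. \<Sum>l\<in>UNIV.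
      ginv g x i k * ginv g x j l * A x i j * A x k l)"

definition trg :: "'n::finite tensor2 \<Rightarrow> 'n tensor2 \<Rightarrow> real^'n \<Rightarrow> real" where
  "trg g A x = (\<Sum>i\<in>UNIV. \<Sum>j\<in>UNIV. ginv g x i j * A x i j)"

definition gl :: "('n::finite \<Rightarrow> real) \<Rightarrow> 'n tensor2" where
  "gl ell x i j = (if i = j then (ell i)\<^sup>2 else 0)"

definition sigflat :: "('n::finite \<Rightarrow> real) \<Rightarrow> 'n \<Rightarrow> 'n tensor2" where
  "sigflat ell j0 x i j = (if i \<noteq> j then 0
      else if i = j0 then kap CARD('n) * (ell i)\<^sup>2 else - (1 / real CARD('n)) * (ell i)\<^sup>2)"

definition ctsh_eqs :: "'n::finite tensor2 \<Rightarrow> 'n tensor2 \<Rightarrow> (real^'n \<Rightarrow> real) \<Rightarrow> (real^'n \<Rightarrow> real)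
    \<Rightarrow> (real^'n \<Rightarrow> real) \<Rightarrow> 'n vfield \<Rightarrow> bool" where
  "ctsh_eqs g \<sigma> \<tau> N \<phi> W \<longleftrightarrow>
     (\<forall>x. - 2 * kap CARD('n) * qn CARD('n) * lap g \<phi> x + scal g x * \<phi> x
         - normsq g (\<lambda>y i j. \<sigma> y i j + 1 / (2 * N y) * ckill g W y i j) x
             * \<phi> x powr (- qn CARD('n) - 1)
         + kap CARD('n) * (\<tau> x)\<^sup>2 * \<phi> x powr (qn CARD('n) - 1) = 0) \<and>
     (\<forall>x j. divT g (\<lambda>y i k. 1 / (2 * N y) * ckill g W y i k) x j
         = kap CARD('n) * \<phi> x powr qn CARD('n) * pd j \<tau> x)"

definition ctsh_solution :: "'n::finite tensor2 \<Rightarrow> 'n tensor2 \<Rightarrow> (real^'n \<Rightarrow> real) \<Rightarrow> (real^'n \<Rightarrow> real)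
    \<Rightarrow> (real^'n \<Rightarrow> real) \<Rightarrow> 'n vfield \<Rightarrow> bool" where
  "ctsh_solution g \<sigma> \<tau> N \<phi> W \<longleftrightarrow>
     (\<forall>x. \<phi> x > 0) \<and> smooth_Tn \<phi> \<and> periodic_Tn \<phi> \<and>
     (\<forall>k. smooth_Tn (\<lambda>x. W x $ k) \<and> periodic_Tn (\<lambda>x. W x $ k)) \<and>
     ctsh_eqs g \<sigma> \<tau> N \<phi> W"

definition gen_g :: "'n::finite tensor2 \<Rightarrow> (real^'n \<Rightarrow> real) \<Rightarrow> 'n tensor2" where
  "gen_g g \<phi> x i j = \<phi> x powr (qn CARD('n) - 2) * g x i j"

definition gen_K :: "'n::finite tensor2 \<Rightarrow> 'n tensor2 \<Rightarrow> (real^'n \<Rightarrow> real) \<Rightarrow> (real^'n \<Rightarrow> real)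
    \<Rightarrow> (real^'n \<Rightarrow> real) \<Rightarrow> 'n vfield \<Rightarrow> 'n tensor2" where
  "gen_K g \<sigma> \<tau> N \<phi> W x i j = \<phi> x powr (-2) * (\<sigma> x i j + 1 / (2 * N x) * ckill g W x i j)
      + \<tau> x / real CARD('n) * gen_g g \<phi> x i j"

definition constraints :: "'n::finite tensor2 \<Rightarrow> 'n tensor2 \<Rightarrow> bool" where
  "constraints gb K \<longleftrightarrow> (\<forall>x. scal gb x - normsq gb K x + (trg gb K x)\<^sup>2 = 0 \<and>
      (\<forall>j. divT gb K x j = pd j (trg gb K) x))"

end

theory Submission
  imports Defs
begin

text \<open>With \<phi> \<equiv> c constant on the flat torus the curvature and Laplacian terms vanish, and the
  CTS-H system becomes algebraic once \<sigma> + (1/2N) L W is a multiple of \<sigma>\<flat>. For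
  W = w(s^1) d/ds^1 one has L W = 2 w' \<sigma>\<flat>, so choosing w' = c^q N (\<tau> - \<tau>*) and
  \<mu> = c^q \<tau>* gives \<sigma> + (1/2N) L W = c^q \<tau> \<sigma>\<flat>; such a periodic w exists because
  \<tau>* is exactly the N-weighted mean of \<tau>, i.e. N (\<tau> - \<tau>*) has mean zero. As
  |\<sigma>\<flat>|^2 = \<kappa>, the Lichnerowicz equation reads c^(2q) \<tau>^2 \<kappa> c^(-q-1) = \<kappa> \<tau>^2 c^(q-1), and
  the momentum equation holds since div (f(s^1) \<sigma>\<flat>) = \<kappa> f' ds^1. Finally
  \<sigma>\<flat> + g/n = \<ell>_1^2 (ds^1)^2, so the generated data are c^(q-2) g_\<ell> = g_(r\<ell>) and
  \<tau> (r \<ell>_1)^2 (ds^1)^2, a tensor with trace \<tau> and squared norm \<tau>^2, which therefore solves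
  the constraints.\<close>

section \<open>Smooth periodic functions on S^1\<close>

lemma smooth_S1_iff_deriv:
  "smooth_S1 f \<longleftrightarrow> (\<forall>x. f differentiable (at x)) \<and> smooth_S1 (deriv f)"
  unfolding smooth_S1_def
proof safe
  fix k x assume "\<forall>k x. (deriv ^^ k) f differentiable at x"
  then show "(deriv ^^ k) (deriv f) differentiable at x"
    by (metis comp_apply funpow_Suc_right)
next
  fix x assume "\<forall>k x. (deriv ^^ k) f differentiable at x"
  then show "f differentiable at x" by (metis funpow_0)
next
  fix k x
  assume a: "\<forall>x. f differentiable at x" "\<forall>k x. (deriv ^^ k) (deriv f) differentiable at x"
  show "(deriv ^^ k) f differentiable at x"
  proof (cases k)
    case 0 then show ?thesis using a by simp
  next
    case (Suc m) then show ?thesis using a(2) by (metis comp_apply funpow_Suc_right)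
  qed
qed

lemma smooth_S1_differentiable: "smooth_S1 f \<Longrightarrow> f differentiable (at x)"
  unfolding smooth_S1_def by (metis funpow_0)

lemma smooth_S1_continuous: "smooth_S1 f \<Longrightarrow> continuous_on UNIV f"
  unfolding smooth_S1_def
  by (metis continuous_at_imp_continuous_on differentiable_imp_continuous_within funpow_0)

text \<open>The ring generated by the smooth functions is closed under deriv by the product rule,
  hence consists of smooth functions.\<close>

inductive smooth_ring :: "(real \<Rightarrow> real) \<Rightarrow> bool" where
  smooth: "smooth_S1 f \<Longrightarrow> smooth_ring f"
| const: "smooth_ring (\<lambda>x. c)"
| add: "smooth_ring f \<Longrightarrow> smooth_ring g \<Longrightarrow> smooth_ring (\<lambda>x. f x + g x)"
| mult: "smooth_ring f \<Longrightarrow> smooth_ring g \<Longrightarrow> smooth_ring (\<lambda>x. f x * g x)"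

lemma smooth_ring_deriv:
  "smooth_ring h \<Longrightarrow> (\<forall>x. h differentiable (at x)) \<and> smooth_ring (deriv h)"
proof (induction rule: smooth_ring.induct)
  case (smooth f)
  then show ?case using smooth_S1_iff_deriv smooth_ring.smooth by blast
next
  case (const c)
  then show ?case by (simp add: smooth_ring.const)
next
  case (add f g)
  have "deriv (\<lambda>x. f x + g x) = (\<lambda>x. deriv f x + deriv g x)"
  proof
    fix x show "deriv (\<lambda>x. f x + g x) x = deriv f x + deriv g x"
      using add.IH by (intro DERIV_imp_deriv derivative_intros) (auto simp: DERIV_deriv_iff_real_differentiable)
  qed
  moreover have "smooth_ring (\<lambda>x. deriv f x + deriv g x)"
    using add.IH by (intro smooth_ring.add) auto
  ultimately show ?case
    using add.IH by (simp add: differentiable_add)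
next
  case (mult f g)
  have "deriv (\<lambda>x. f x * g x) = (\<lambda>x. deriv f x * g x + f x * deriv g x)"
  proof
    fix x
    have "(f has_real_derivative deriv f x) (at x)" "(g has_real_derivative deriv g x) (at x)"
      using mult.IH by (auto simp: DERIV_deriv_iff_real_differentiable)
    from DERIV_mult[OF this] show "deriv (\<lambda>x. f x * g x) x = deriv f x * g x + f x * deriv g x"
      by (metis DERIV_imp_deriv mult.commute)
  qed
  moreover have "smooth_ring (\<lambda>x. deriv f x * g x + f x * deriv g x)"
    using mult by (intro smooth_ring.add smooth_ring.mult) auto
  ultimately show ?case
    using mult.IH by (simp add: differentiable_mult)
qed

lemma smooth_ring_imp_smooth_S1:
  assumes "smooth_ring h" shows "smooth_S1 h"
proof -
  have "smooth_ring ((deriv ^^ k) h)" for k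
  proof (induction k)
    case (Suc k) then show ?case by (simp add: smooth_ring_deriv)
  qed (use assms in simp)
  then show ?thesis unfolding smooth_S1_def using smooth_ring_deriv by blast
qed

lemma smooth_S1_const: "smooth_S1 (\<lambda>x. c)"
  by (rule smooth_ring_imp_smooth_S1[OF smooth_ring.const])

lemma smooth_S1_mult: "smooth_S1 f \<Longrightarrow> smooth_S1 g \<Longrightarrow> smooth_S1 (\<lambda>x. f x * g x)"
  by (rule smooth_ring_imp_smooth_S1[OF smooth_ring.mult[OF smooth_ring.smooth smooth_ring.smooth]])

lemma smooth_S1_diff: "smooth_S1 f \<Longrightarrow> smooth_S1 g \<Longrightarrow> smooth_S1 (\<lambda>x. f x - g x)"
proof -
  assume f: "smooth_S1 f" and g: "smooth_S1 g"
  have "smooth_ring (\<lambda>x. f x + (\<lambda>x. -1) x * g x)"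
    by (rule smooth_ring.add[OF smooth_ring.smooth[OF f] smooth_ring.mult[OF smooth_ring.const smooth_ring.smooth[OF g]]])
  then show ?thesis by (simp add: smooth_ring_imp_smooth_S1)
qed

lemma continuous_has_antiderivative:
  fixes f :: "real \<Rightarrow> real"
  assumes "continuous_on UNIV f"
  obtains G where "\<And>x. (G has_real_derivative f x) (at x)"
  using einterval_antiderivative[of "-\<infinity>" "\<infinity>" f] assms
  by (auto simp: has_real_derivative_iff_has_vector_derivative continuous_on_eq_continuous_at)

lemma periodic_S1_antiderivative:
  fixes f G :: "real \<Rightarrow> real"
  assumes G: "\<And>x. (G has_real_derivative f x) (at x)"
    and "periodic_S1 f" and "integral {0..1} f = 0"
  shows "periodic_S1 G"
proof -
  have "((\<lambda>s. G (s + 1) - G s) has_real_derivative 0) (at x)" for x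
  proof -
    have "((\<lambda>s. G (s + 1)) has_real_derivative f (x + 1)) (at x)"
      using G[of "x + 1"] DERIV_shift by blast
    then have "((\<lambda>s. G (s + 1) - G s) has_real_derivative f (x + 1) - f x) (at x)"
      by (intro derivative_intros G)
    then show ?thesis using \<open>periodic_S1 f\<close> by (simp add: periodic_S1_def)
  qed
  then have shift: "G (s + 1) - G s = G 1 - G 0" for s
    using DERIV_isconst_all[of "\<lambda>s. G (s + 1) - G s" s 0] by simp
  have "(f has_integral (G 1 - G 0)) {0..1}"
    using G by (intro fundamental_theorem_of_calculus)
      (auto intro: has_field_derivative_at_within
        simp: has_real_derivative_iff_has_vector_derivative[symmetric])
  then have "G 1 - G 0 = 0" using assms(3) by (simp add: integral_unique)
  then show ?thesis using shift unfolding periodic_S1_def by simp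
qed

lemma smooth_periodic_antiderivative:
  assumes "smooth_S1 f" and "periodic_S1 f" and "integral {0..1} f = 0"
  obtains G where "\<And>x. (G has_real_derivative f x) (at x)" and "smooth_S1 G" and "periodic_S1 G"
proof -
  obtain G where G: "\<And>x. (G has_real_derivative f x) (at x)"
    using continuous_has_antiderivative smooth_S1_continuous[OF assms(1)] by blast
  have "deriv G = f" using G by (auto intro!: ext DERIV_imp_deriv)
  then have "smooth_S1 G"
    using G assms(1) by (subst smooth_S1_iff_deriv) (auto simp: real_differentiable_def)
  then show thesis using that G periodic_S1_antiderivative[OF G assms(2,3)] by blast
qed

lemma integral_pos_interval:
  fixes f :: "real \<Rightarrow> real"
  assumes "a < b" and "continuous_on {a..b} f" and "\<And>s. s \<in> {a..b} \<Longrightarrow> f s > 0"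
  shows "integral {a..b} f > 0"
proof -
  obtain s0 where s0: "s0 \<in> {a..b}" and min: "\<forall>s\<in>{a..b}. f s0 \<le> f s"
    using continuous_attains_inf[OF _ _ assms(2)] assms(1) by auto
  have "integral {a..b} (\<lambda>_::real. f s0) \<le> integral {a..b} f"
    using min assms(2)
    by (intro Henstock_Kurzweil_Integration.integral_le integrable_continuous_interval) auto
  moreover have "integral {a..b} (\<lambda>_::real. f s0) > 0"
    using assms(1) assms(3)[OF s0] by simp
  ultimately show ?thesis by linarith
qed

lemma integral_weighted_deviation_eq_0:
  fixes N t :: "real \<Rightarrow> real"
  assumes "N integrable_on S" and "(\<lambda>s. N s * t s) integrable_on S" and "integral S N \<noteq> 0"
  shows "integral S (\<lambda>s. N s * (t s - integral S (\<lambda>s. N s * t s) / integral S N)) = 0"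
proof -
  let ?m = "integral S (\<lambda>s. N s * t s) / integral S N"
  have "integral S (\<lambda>s. N s * t s - ?m * N s)
      = integral S (\<lambda>s. N s * t s) - integral S (\<lambda>s. ?m * N s)"
    using assms(1,2) by (intro integral_diff integrable_on_mult_right)
  also have "\<dots> = 0" using assms(3) by simp
  finally show ?thesis by (simp add: algebra_simps)
qed

lemma periodic_primitive_lapse_deviation:
  fixes t Nf :: "real \<Rightarrow> real"
  assumes "smooth_S1 t" "periodic_S1 t" "smooth_S1 Nf" "periodic_S1 Nf" "\<forall>s. Nf s > 0"
    and \<tau>s: "\<tau>s = integral {0..1} (\<lambda>s. Nf s * t s) / integral {0..1} Nf"
  obtains w where "\<And>s. (w has_real_derivative a * (Nf s * (t s - \<tau>s))) (at s)"
    and "smooth_S1 w" and "periodic_S1 w"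
proof -
  let ?f = "\<lambda>s. a * (Nf s * (t s - \<tau>s))"
  have cont: "continuous_on {0..1} Nf" "continuous_on {0..1} t"
    using assms(1,3) by (metis smooth_S1_continuous continuous_on_subset subset_UNIV)+
  then have "Nf integrable_on {0..1}" "(\<lambda>s. Nf s * t s) integrable_on {0..1}"
    by (auto intro!: integrable_continuous_interval continuous_intros)
  moreover have "integral {0..1} Nf \<noteq> 0"
    using integral_pos_interval[OF _ cont(1)] assms(5) by force
  ultimately have "integral {0..1} (\<lambda>s. Nf s * (t s - \<tau>s)) = 0"
    unfolding \<tau>s by (rule integral_weighted_deviation_eq_0)
  then have mean_zero: "integral {0..1} ?f = 0" by simp
  have "smooth_S1 ?f"
    using assms(1,3) by (intro smooth_S1_mult smooth_S1_diff smooth_S1_const)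
  moreover have "periodic_S1 ?f" using assms(2,4) by (simp add: periodic_S1_def)
  ultimately show thesis using mean_zero that by (rule smooth_periodic_antiderivative)
qed

section \<open>Functions of one coordinate on T^n\<close>

lemma axis_translate_nth: "(x + h *\<^sub>R axis k 1) $ j = x $ j + (if k = j then h else 0)"
  by (simp add: axis_def)

lemma pd_const [simp]: "pd k (\<lambda>y. c) = (\<lambda>x. 0)"
  unfolding pd_def by simp

lemma pd_coord_fun:
  assumes "k = j0 \<Longrightarrow> H differentiable (at (x $ j0))"
  shows "pd k (\<lambda>y. H (y $ j0)) x = (if k = j0 then deriv H (x $ j0) else 0)"
proof (cases "k = j0")
  case True
  then have "(H has_real_derivative deriv H (x $ j0)) (at (x $ j0 + 0))"
    using assms by (simp add: DERIV_deriv_iff_real_differentiable)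
  then have "((\<lambda>h. H (x $ j0 + h)) has_real_derivative deriv H (x $ j0)) (at 0)"
    using DERIV_shift[of H _ 0 "x $ j0"] by (simp add: add.commute)
  then show ?thesis unfolding pd_def axis_translate_nth using True by (simp add: DERIV_imp_deriv)
qed (simp add: pd_def axis_def)

lemma foldr_pd_coord_fun:
  assumes "smooth_S1 H"
  shows "foldr pd ks (\<lambda>y. H (y $ j0))
    = (if \<forall>k\<in>set ks. k = j0 then (\<lambda>x. (deriv ^^ length ks) H (x $ j0)) else (\<lambda>x. 0))"
proof (induction ks)
  case (Cons k ks)
  have "pd k (\<lambda>y. (deriv ^^ length ks) H (y $ j0)) x
      = (if k = j0 then (deriv ^^ Suc (length ks)) H (x $ j0) else 0)" for x
    using assms unfolding smooth_S1_def by (subst pd_coord_fun) auto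
  then show ?case using Cons by (auto intro!: ext)
qed simp

lemma smooth_Tn_coord_fun:
  assumes "smooth_S1 H"
  shows "smooth_Tn (\<lambda>y. H (y $ j0))"
  unfolding smooth_Tn_def
proof (intro allI conjI)
  fix ks :: "'a list" and k x
  let ?D = "(deriv ^^ length ks) H"
  have D: "?D differentiable (at s)" for s
    using assms unfolding smooth_S1_def by blast
  then have "continuous_on UNIV ?D"
    by (meson continuous_at_imp_continuous_on differentiable_imp_continuous_within)
  then have "continuous_on UNIV (\<lambda>x::real^'a. ?D (x $ j0))"
    by (rule continuous_on_compose2) (auto intro: continuous_intros)
  then show "continuous_on UNIV (foldr pd ks (\<lambda>y. H (y $ j0)))"
    unfolding foldr_pd_coord_fun[OF assms] by (cases "\<forall>k\<in>set ks. k = j0") auto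
  have "(\<lambda>h. x $ j0 + (if k = j0 then h else 0)) differentiable (at (0::real))"
    by (cases "k = j0") (auto intro!: derivative_intros)
  then have "(?D \<circ> (\<lambda>h. x $ j0 + (if k = j0 then h else 0))) differentiable (at 0)"
    using D by (rule differentiable_chain_at)
  then have "(\<lambda>h. ?D ((x + h *\<^sub>R axis k 1) $ j0)) differentiable (at 0)"
    unfolding axis_translate_nth by (simp add: o_def)
  then show "(\<lambda>h. foldr pd ks (\<lambda>y. H (y $ j0)) (x + h *\<^sub>R axis k 1)) differentiable (at 0)"
    unfolding foldr_pd_coord_fun[OF assms] by (cases "\<forall>k\<in>set ks. k = j0") auto
qed

lemma periodic_Tn_coord_fun:
  assumes "periodic_S1 H"
  shows "periodic_Tn (\<lambda>y::real^'n::finite. H (y $ j0))"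
  using assms unfolding periodic_Tn_def periodic_S1_def by (simp add: axis_def)

section \<open>The flat metric and the tensor \<sigma>\<flat>\<close>

lemma matrix_inv_unique:
  fixes A B :: "real^'n^'n"
  assumes "A ** B = mat 1" and "B ** A = mat 1"
  shows "matrix_inv A = B"
proof -
  let ?A' = "matrix_inv A"
  have "A ** ?A' = mat 1 \<and> ?A' ** A = mat 1"
    unfolding matrix_inv_def by (rule someI_ex) (use assms in blast)
  then have inv: "?A' ** A = mat 1" by blast
  have "?A' = ?A' ** (A ** B)" using assms by (simp add: matrix_mul_rid)
  also have "\<dots> = (?A' ** A) ** B" by (simp add: matrix_mul_assoc)
  also have "\<dots> = B" using inv by (simp add: matrix_mul_lid)
  finally show ?thesis .
qed

lemma ginv_gl:
  assumes "\<forall>k. e k \<noteq> 0"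
  shows "ginv (gl e) x i j = (if i = j then 1 / (e i)\<^sup>2 else 0)"
proof -
  let ?A = "(\<chi> a b. gl e x a b) :: real^'a^'a"
  let ?B = "(\<chi> a b. if a = b then 1 / (e a)\<^sup>2 else 0) :: real^'a^'a"
  have delta: "(if a = k then u else 0) * (if k = b then v else 0)
      = (if k = a then (if a = b then u * v else 0) else 0)" for a b k :: 'a and u v :: real
    by simp
  have "?A ** ?B = mat 1" "?B ** ?A = mat 1"
    using assms by (auto simp: matrix_matrix_mult_def mat_def gl_def vec_eq_iff delta)
  then show ?thesis unfolding ginv_def by (simp add: matrix_inv_unique)
qed

lemma chr_gl [simp]: "chr (gl e) x k i j = 0"
  unfolding chr_def gl_def by simp

lemma scal_gl [simp]: "scal (gl e) x = 0"
  unfolding scal_def ricci_def by simp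

lemma lap_gl_const [simp]: "lap (gl e) (\<lambda>x. c) x = 0"
  unfolding lap_def by simp

lemma normsq_gl:
  assumes "\<forall>k. e k \<noteq> 0"
  shows "normsq (gl e) A x = (\<Sum>i\<in>UNIV. \<Sum>j\<in>UNIV. (A x i j)\<^sup>2 / ((e i)\<^sup>2 * (e j)\<^sup>2))"
proof -
  have "ginv (gl e) x i k * ginv (gl e) x j l * A x i j * A x k l =
      (if l = j then if k = i then (A x i j)\<^sup>2 / ((e i)\<^sup>2 * (e j)\<^sup>2) else 0 else 0)" for i j k l
    unfolding ginv_gl[OF assms] by (auto simp: power2_eq_square)
  then show ?thesis unfolding normsq_def by simp
qed

lemma trg_gl:
  assumes "\<forall>k. e k \<noteq> 0"
  shows "trg (gl e) A x = (\<Sum>i\<in>UNIV. A x i i / (e i)\<^sup>2)"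
proof -
  have "ginv (gl e) x i j * A x i j = (if j = i then A x i i / (e i)\<^sup>2 else 0)" for i j
    unfolding ginv_gl[OF assms] by auto
  then show ?thesis unfolding trg_def by simp
qed

lemma divT_gl:
  assumes "\<forall>k. e k \<noteq> 0"
  shows "divT (gl e) A x j = (\<Sum>i\<in>UNIV. pd i (\<lambda>y. A y i j) x / (e i)\<^sup>2)"
proof -
  have "ginv (gl e) x i k * covT (gl e) A x i k j
      = (if k = i then pd i (\<lambda>y. A y i j) x / (e i)\<^sup>2 else 0)" for i k
    unfolding ginv_gl[OF assms] covT_def by auto
  then show ?thesis unfolding divT_def by simp
qed

lemma divT_gl_coord_diagonal:
  fixes e :: "'n::finite \<Rightarrow> real"
  assumes e: "\<forall>k. e k \<noteq> 0" and f: "\<forall>s. f differentiable (at s)"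
    and D: "\<forall>i j. i \<noteq> j \<longrightarrow> D i j = 0"
  shows "divT (gl e) (\<lambda>y i j. f (y $ j0) * D i j) x j
    = (if j = j0 then deriv f (x $ j0) * D j0 j0 / (e j0)\<^sup>2 else 0)"
proof -
  have "deriv (\<lambda>s. f s * d) s = deriv f s * d" "(\<lambda>s. f s * d) differentiable (at s)" for s d
    using f by (auto intro!: DERIV_imp_deriv derivative_eq_intros
        simp: DERIV_deriv_iff_real_differentiable)
  then have "pd i (\<lambda>y. f (y $ j0) * D i j) x / (e i)\<^sup>2
      = (if i = j0 then deriv f (x $ j0) * D j0 j / (e j0)\<^sup>2 else 0)" for i
    using pd_coord_fun[of i j0 "\<lambda>s. f s * D i j" x] by simp
  then have "divT (gl e) (\<lambda>y i j. f (y $ j0) * D i j) x j = deriv f (x $ j0) * D j0 j / (e j0)\<^sup>2"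
    unfolding divT_gl[OF e] by simp
  then show ?thesis using D by auto
qed

lemma sum_if_eq_else:
  "(\<Sum>i\<in>(UNIV::'n::finite set). if i = j0 then a else b) = a + (real CARD('n) - 1) * (b::real)"
proof -
  have "(\<Sum>i\<in>(UNIV::'n set). if i = j0 then a else b)
      = (\<Sum>i\<in>(UNIV::'n set). b + (if i = j0 then a - b else 0))"
    by (rule sum.cong) auto
  also have "\<dots> = real CARD('n) * b + (a - b)" by (simp add: sum.distrib)
  finally show ?thesis by (simp add: algebra_simps)
qed

lemma normsq_gl_sigflat:
  fixes e :: "'n::finite \<Rightarrow> real"
  assumes "\<forall>k. e k \<noteq> 0"
  shows "normsq (gl e) (\<lambda>y i j. a y * sigflat e j0 y i j) x = (a x)\<^sup>2 * kap CARD('n)"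
proof -
  let ?n = "real CARD('n)"
  have "(a x * sigflat e j0 x i j)\<^sup>2 / ((e i)\<^sup>2 * (e j)\<^sup>2) =
      (if j = i then if i = j0 then (a x)\<^sup>2 * (kap CARD('n))\<^sup>2 else (a x)\<^sup>2 / ?n\<^sup>2 else 0)" for i j
    using assms by (auto simp: sigflat_def field_simps power2_eq_square)
  then have "normsq (gl e) (\<lambda>y i j. a y * sigflat e j0 y i j) x =
      (\<Sum>i\<in>(UNIV::'n set). if i = j0 then (a x)\<^sup>2 * (kap CARD('n))\<^sup>2 else (a x)\<^sup>2 / ?n\<^sup>2)"
    unfolding normsq_gl[OF assms] by simp
  also have "\<dots> = (a x)\<^sup>2 * (kap CARD('n))\<^sup>2 + (?n - 1) * ((a x)\<^sup>2 / ?n\<^sup>2)"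
    by (rule sum_if_eq_else)
  also have "\<dots> = (a x)\<^sup>2 * kap CARD('n)"
    unfolding kap_def by (simp add: field_simps power2_eq_square)
  finally show ?thesis .
qed

lemma divT_gl_sigflat:
  fixes e :: "'n::finite \<Rightarrow> real"
  assumes "\<forall>k. e k \<noteq> 0" and "\<forall>s. f differentiable (at s)"
  shows "divT (gl e) (\<lambda>y i j. f (y $ j0) * sigflat e j0 y i j) x j
    = (if j = j0 then kap CARD('n) * deriv f (x $ j0) else 0)"
proof -
  have "sigflat e j0 y = sigflat e j0 0" for y by (simp add: sigflat_def fun_eq_iff)
  moreover have "\<forall>i j. i \<noteq> j \<longrightarrow> sigflat e j0 0 i j = 0" by (simp add: sigflat_def)
  ultimately show ?thesis
    using divT_gl_coord_diagonal[OF assms] assms(1) by (simp add: sigflat_def)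
qed

lemma sigflat_add_gl:
  fixes e :: "'n::finite \<Rightarrow> real"
  shows "sigflat e j0 x i j + gl e x i j / real CARD('n)
    = (if i = j0 \<and> j = j0 then (e j0)\<^sup>2 else 0)"
  unfolding sigflat_def gl_def kap_def by (simp add: field_simps)

definition coord_field :: "'n::finite \<Rightarrow> (real \<Rightarrow> real) \<Rightarrow> 'n vfield" where
  "coord_field j0 w x = (\<chi> k. if k = j0 then w (x $ j0) else 0)"

lemma coord_field_component:
  "(\<lambda>y. coord_field j0 w y $ k) = (\<lambda>y. (if k = j0 then w else (\<lambda>_. 0)) (y $ j0))"
  unfolding coord_field_def by auto

lemma coord_field_smooth_periodic:
  assumes "smooth_S1 w" and "periodic_S1 w"
  shows "smooth_Tn (\<lambda>y. coord_field j0 w y $ k) \<and> periodic_Tn (\<lambda>y. coord_field j0 w y $ k)"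
proof -
  have "smooth_S1 (if k = j0 then w else (\<lambda>_. 0))" "periodic_S1 (if k = j0 then w else (\<lambda>_. 0))"
    using assms smooth_S1_const by (auto simp: periodic_S1_def)
  then show ?thesis
    unfolding coord_field_component by (simp add: smooth_Tn_coord_fun periodic_Tn_coord_fun)
qed

lemma covW_gl_coord_field:
  assumes "\<forall>s. w differentiable (at s)"
  shows "covW (gl e) (coord_field j0 w) x i k = (if i = j0 \<and> k = j0 then deriv w (x $ j0) else 0)"
  unfolding covW_def coord_field_component using assms by (subst pd_coord_fun) auto

lemma ckill_gl_coord_field:
  assumes "\<forall>s. w differentiable (at s)"
  shows "ckill (gl e) (coord_field j0 w) x i j = 2 * deriv w (x $ j0) * sigflat e j0 x i j"
proof -
  have "gl e x j k * covW (gl e) (coord_field j0 w) x i k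
      + gl e x i k * covW (gl e) (coord_field j0 w) x j k
      = (if k = j0 then if i = j0 \<and> j = j0 then 2 * (e j0)\<^sup>2 * deriv w (x $ j0) else 0 else 0)" for k
    unfolding covW_gl_coord_field[OF assms] gl_def by auto
  then have "lieg (gl e) (coord_field j0 w) x i j
      = (if i = j0 \<and> j = j0 then 2 * (e j0)\<^sup>2 * deriv w (x $ j0) else 0)"
    unfolding lieg_def by simp
  moreover have "divV (gl e) (coord_field j0 w) x = deriv w (x $ j0)"
    unfolding divV_def covW_gl_coord_field[OF assms] by simp
  ultimately show ?thesis
    unfolding ckill_def sigflat_def gl_def kap_def by (auto simp: field_simps)
qed

lemma constraints_gl_axial:
  fixes e :: "'n::finite \<Rightarrow> real"
  assumes e: "\<forall>k. e k \<noteq> 0" and t: "\<forall>s. t differentiable (at s)"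
  shows "constraints (gl e) (\<lambda>x i j. if i = j0 \<and> j = j0 then t (x $ j0) * (e j0)\<^sup>2 else 0)"
    (is "constraints _ ?K")
proof -
  have "?K x i i / (e i)\<^sup>2 = (if i = j0 then t (x $ j0) else 0)" for x i
    using e by simp
  then have tr: "trg (gl e) ?K = (\<lambda>x. t (x $ j0))"
    unfolding trg_gl[OF e] by simp
  have "normsq (gl e) ?K x = (t (x $ j0))\<^sup>2" for x
  proof -
    have "(?K x i j)\<^sup>2 / ((e i)\<^sup>2 * (e j)\<^sup>2)
        = (if j = j0 then if i = j0 then (t (x $ j0))\<^sup>2 else 0 else 0)" for i j
      using e by (auto simp: power2_eq_square)
    then show ?thesis unfolding normsq_gl[OF e] by simp
  qed
  moreover have "divT (gl e) ?K x j = pd j (trg (gl e) ?K) x" for x j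
  proof -
    have "?K = (\<lambda>y i j. t (y $ j0) * (if i = j0 \<and> j = j0 then (e j0)\<^sup>2 else 0))"
      by (simp add: fun_eq_iff)
    then have "divT (gl e) ?K x j = (if j = j0 then deriv t (x $ j0) else 0)"
      using divT_gl_coord_diagonal[OF e t, of "\<lambda>i j. if i = j0 \<and> j = j0 then (e j0)\<^sup>2 else 0"] e
      by simp
    then show ?thesis unfolding tr using t by (simp add: pd_coord_fun)
  qed
  ultimately show ?thesis unfolding constraints_def tr by simp
qed

section \<open>Solutions with constant conformal factor\<close>

lemma qn_gt_2: "n \<ge> 3 \<Longrightarrow> qn n > 2"
  unfolding qn_def by (simp add: field_simps)

lemma qn_conformal_exponent: "n \<ge> 3 \<Longrightarrow> 1 / qn n * ((qn n - 2) / 2) = 1 / real n"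
  unfolding qn_def by (simp add: field_simps)

lemma ctsh_eqs_gl_const_phi:
  fixes ell :: "'n::finite \<Rightarrow> real" and t :: "real \<Rightarrow> real"
  assumes ell: "\<forall>k. ell k \<noteq> 0" and t: "\<forall>s. t differentiable (at s)" and c: "c > 0"
    and half_ckill: "\<And>x i j. 1 / (2 * N x) * ckill (gl ell) W x i j
      = c powr qn CARD('n) * (t (x $ j0) - b) * sigflat ell j0 x i j"
    and \<mu>: "\<mu> = c powr qn CARD('n) * b"
  shows "ctsh_eqs (gl ell) (\<lambda>x i j. \<mu> * sigflat ell j0 x i j) (\<lambda>x. t (x $ j0)) N (\<lambda>x. c) W"
proof -
  let ?q = "qn CARD('n)"
  have "(\<lambda>y i j. \<mu> * sigflat ell j0 y i j + 1 / (2 * N y) * ckill (gl ell) W y i j)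
      = (\<lambda>y i j. c powr ?q * t (y $ j0) * sigflat ell j0 y i j)"
    unfolding half_ckill \<mu> by (simp add: algebra_simps)
  then have norm: "normsq (gl ell) (\<lambda>y i j. \<mu> * sigflat ell j0 y i j + 1 / (2 * N y) * ckill (gl ell) W y i j) x
      = (c powr ?q)\<^sup>2 * (t (x $ j0))\<^sup>2 * kap CARD('n)" for x
    using normsq_gl_sigflat[OF ell, of "\<lambda>y. c powr ?q * t (y $ j0)"] by (simp add: power_mult_distrib)
  have "(c powr ?q)\<^sup>2 * c powr (- ?q - 1) = c powr (?q - 1)"
    by (simp add: power2_eq_square flip: powr_add)
  then have hamiltonian: "- 2 * kap CARD('n) * ?q * lap (gl ell) (\<lambda>x. c) x + scal (gl ell) x * c
      - normsq (gl ell) (\<lambda>y i j. \<mu> * sigflat ell j0 y i j + 1 / (2 * N y) * ckill (gl ell) W y i j) x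
        * c powr (- ?q - 1)
      + kap CARD('n) * (t (x $ j0))\<^sup>2 * c powr (?q - 1) = 0" for x
    unfolding norm by (simp add: algebra_simps)
  have "deriv (\<lambda>s. c powr ?q * (t s - b)) s = c powr ?q * deriv t s"
    "(\<lambda>s. c powr ?q * (t s - b)) differentiable (at s)" for s
    using t by (auto intro!: DERIV_imp_deriv derivative_eq_intros
        simp: DERIV_deriv_iff_real_differentiable)
  then have "divT (gl ell) (\<lambda>y i k. 1 / (2 * N y) * ckill (gl ell) W y i k) x j
      = (if j = j0 then kap CARD('n) * (c powr ?q * deriv t (x $ j0)) else 0)" for x j
    unfolding half_ckill using divT_gl_sigflat[OF ell, of "\<lambda>s. c powr ?q * (t s - b)"] by simp
  then have momentum: "divT (gl ell) (\<lambda>y i k. 1 / (2 * N y) * ckill (gl ell) W y i k) x j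
      = kap CARD('n) * c powr ?q * pd j (\<lambda>x. t (x $ j0)) x" for x j
    using t by (simp add: pd_coord_fun)
  show ?thesis unfolding ctsh_eqs_def using hamiltonian momentum by simp
qed

lemma gen_g_gl_const_phi:
  assumes "c > 0" and "r = c powr ((qn CARD('n::finite) - 2) / 2)"
  shows "gen_g (gl ell) (\<lambda>x::real^'n. c) = gl (\<lambda>k. r * ell k)"
proof -
  have "r\<^sup>2 = c powr (qn CARD('n) - 2)"
    using assms by (simp add: power2_eq_square flip: powr_add)
  then show ?thesis unfolding gen_g_def gl_def by (simp add: fun_eq_iff power_mult_distrib)
qed

lemma gen_K_gl_const_phi:
  fixes ell :: "'n::finite \<Rightarrow> real" and t :: "real \<Rightarrow> real"
  assumes c: "c > 0" and r: "r = c powr ((qn CARD('n) - 2) / 2)"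
    and half_ckill: "\<And>x i j. 1 / (2 * N x) * ckill (gl ell) W x i j
      = c powr qn CARD('n) * (t (x $ j0) - b) * sigflat ell j0 x i j"
    and \<mu>: "\<mu> = c powr qn CARD('n) * b"
  shows "gen_K (gl ell) (\<lambda>x i j. \<mu> * sigflat ell j0 x i j) (\<lambda>x. t (x $ j0)) N (\<lambda>x. c) W
    = (\<lambda>x i j. if i = j0 \<and> j = j0 then t (x $ j0) * (r * ell j0)\<^sup>2 else 0)"
proof (intro ext)
  fix x i j
  let ?q = "qn CARD('n)"
  have r2: "r\<^sup>2 = c powr (?q - 2)" and "c powr (-2) * c powr ?q = c powr (?q - 2)"
    using c r by (simp_all add: power2_eq_square flip: powr_add)
  then have "gen_K (gl ell) (\<lambda>x i j. \<mu> * sigflat ell j0 x i j) (\<lambda>x. t (x $ j0)) N (\<lambda>x. c) W x i j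
      = r\<^sup>2 * t (x $ j0) * (sigflat ell j0 x i j + gl ell x i j / real CARD('n))"
    unfolding gen_K_def gen_g_def half_ckill \<mu> by (simp add: algebra_simps)
  then show "gen_K (gl ell) (\<lambda>x i j. \<mu> * sigflat ell j0 x i j) (\<lambda>x. t (x $ j0)) N (\<lambda>x. c) W x i j
      = (if i = j0 \<and> j = j0 then t (x $ j0) * (r * ell j0)\<^sup>2 else 0)"
    unfolding sigflat_add_gl by (simp add: power_mult_distrib)
qed

lemma ctsh_gl_const_phi_solution:
  fixes ell :: "'n::finite \<Rightarrow> real" and t Nf :: "real \<Rightarrow> real"
  assumes ell: "\<forall>k. ell k \<noteq> 0"
    and t: "smooth_S1 t" "periodic_S1 t" and Nf: "smooth_S1 Nf" "periodic_S1 Nf" "\<forall>s. Nf s > 0"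
    and \<tau>s: "\<tau>s = integral {0..1} (\<lambda>s. Nf s * t s) / integral {0..1} Nf"
    and c: "c > 0" and \<mu>: "\<mu> = c powr qn CARD('n) * \<tau>s"
    and r: "r = c powr ((qn CARD('n) - 2) / 2)"
  shows "\<exists>W. ctsh_solution (gl ell) (\<lambda>x i j. \<mu> * sigflat ell j0 x i j) (\<lambda>x. t (x $ j0))
        (\<lambda>x. Nf (x $ j0)) (\<lambda>x. c) W
      \<and> (\<forall>x k. k \<noteq> j0 \<longrightarrow> W x $ k = 0)
      \<and> (\<forall>x i j. 1 / (2 * Nf (x $ j0)) * ckill (gl ell) W x i j
          = c powr qn CARD('n) * (t (x $ j0) - \<tau>s) * sigflat ell j0 x i j)
      \<and> gen_g (gl ell) (\<lambda>x. c) = gl (\<lambda>k. r * ell k)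
      \<and> gen_K (gl ell) (\<lambda>x i j. \<mu> * sigflat ell j0 x i j) (\<lambda>x. t (x $ j0)) (\<lambda>x. Nf (x $ j0)) (\<lambda>x. c) W
          = (\<lambda>x i j. if i = j0 \<and> j = j0 then t (x $ j0) * (r * ell j0)\<^sup>2 else 0)
      \<and> constraints (gen_g (gl ell) (\<lambda>x. c))
          (gen_K (gl ell) (\<lambda>x i j. \<mu> * sigflat ell j0 x i j) (\<lambda>x. t (x $ j0)) (\<lambda>x. Nf (x $ j0)) (\<lambda>x. c) W)"
proof -
  let ?q = "qn CARD('n)"
  have t': "\<forall>s. t differentiable (at s)" using t(1) by (simp add: smooth_S1_differentiable)
  obtain w where w': "\<And>s. (w has_real_derivative c powr ?q * (Nf s * (t s - \<tau>s))) (at s)"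
    and w: "smooth_S1 w" "periodic_S1 w"
    using periodic_primitive_lapse_deviation[OF t Nf \<tau>s] by blast
  define W where "W = coord_field j0 w"
  have "\<forall>s. w differentiable (at s)" using w' by (auto simp: real_differentiable_def)
  then have half_ckill: "1 / (2 * Nf (x $ j0)) * ckill (gl ell) W x i j
      = c powr ?q * (t (x $ j0) - \<tau>s) * sigflat ell j0 x i j" for x i j
    unfolding W_def ckill_gl_coord_field[OF \<open>\<forall>s. w differentiable (at s)\<close>] DERIV_imp_deriv[OF w']
    using Nf(3)[rule_format, of "x $ j0"] by (simp add: field_simps)
  have r_ell: "\<forall>k. r * ell k \<noteq> 0" using c r ell by simp
  have constraints: "constraints (gl (\<lambda>k. r * ell k))
      (\<lambda>x i j. if i = j0 \<and> j = j0 then t (x $ j0) * (r * ell j0)\<^sup>2 else 0)"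
    using constraints_gl_axial[OF r_ell t'] by simp
  have "smooth_Tn (\<lambda>x::real^'n. (\<lambda>_. c) (x $ j0))"
    by (rule smooth_Tn_coord_fun[OF smooth_S1_const])
  moreover have "periodic_Tn (\<lambda>x::real^'n. c)" by (simp add: periodic_Tn_def)
  ultimately have "ctsh_solution (gl ell) (\<lambda>x i j. \<mu> * sigflat ell j0 x i j) (\<lambda>x. t (x $ j0))
      (\<lambda>x. Nf (x $ j0)) (\<lambda>x. c) W"
    unfolding ctsh_solution_def W_def
    using c ctsh_eqs_gl_const_phi[OF ell t' c half_ckill[unfolded W_def] \<mu>]
      coord_field_smooth_periodic[OF w]
    by blast
  moreover have "\<forall>x k. k \<noteq> j0 \<longrightarrow> W x $ k = 0" unfolding W_def coord_field_def by simp
  ultimately show ?thesis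
    using half_ckill gen_g_gl_const_phi[OF c r] gen_K_gl_const_phi[OF c r half_ckill \<mu>] constraints
    by (intro exI[of _ W]) simp
qed

theorem proposition6p1:
  fixes ell :: "'n::finite \<Rightarrow> real" and j0 :: 'n and \<mu> :: real
    and t Nf :: "real \<Rightarrow> real"
  assumes "CARD('n) \<ge> 3"
    and "\<forall>k. ell k > 0"
    and "smooth_S1 t" and "periodic_S1 t"
    and "smooth_S1 Nf" and "periodic_S1 Nf" and "\<forall>s. Nf s > 0"
  defines "\<tau> \<equiv> (\<lambda>x::real^'n. t (x $ j0))"
    and "N \<equiv> (\<lambda>x::real^'n. Nf (x $ j0))"
    and "\<tau>s \<equiv> integral {0..1} (\<lambda>s. Nf s * t s) / integral {0..1} Nf"
  defines "\<xi> \<equiv> (\<lambda>x::real^'n. \<tau> x - \<tau>s)"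
    and "\<sigma> \<equiv> (\<lambda>x::real^'n. \<lambda>i j. \<mu> * sigflat ell j0 x i j)"
  shows
   "(\<mu> \<noteq> 0 \<and> \<tau>s \<noteq> 0 \<and> sgn \<mu> = sgn \<tau>s \<longrightarrow>
      (\<forall>c r. c = (\<mu> / \<tau>s) powr (1 / qn CARD('n)) \<longrightarrow> r = c powr ((qn CARD('n) - 2) / 2) \<longrightarrow>
        (\<exists>W. ctsh_solution (gl ell) \<sigma> \<tau> N (\<lambda>x. c) W
           \<and> (\<forall>x k. k \<noteq> j0 \<longrightarrow> W x $ k = 0)
           \<and> (\<forall>x i j. 1 / (2 * N x) * ckill (gl ell) W x i j = c powr qn CARD('n) * \<xi> x * sigflat ell j0 x i j)
           \<and> gen_g (gl ell) (\<lambda>x. c) = gl (\<lambda>k. r * ell k)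
           \<and> gen_K (gl ell) \<sigma> \<tau> N (\<lambda>x. c) W
               = (\<lambda>x i j. if i = j0 \<and> j = j0 then \<tau> x * (r * ell j0)\<^sup>2 else 0)
           \<and> constraints (gen_g (gl ell) (\<lambda>x. c)) (gen_K (gl ell) \<sigma> \<tau> N (\<lambda>x. c) W)
           \<and> r = (\<mu> / \<tau>s) powr (1 / real CARD('n)))))
    \<and> (\<mu> = 0 \<and> \<tau>s = 0 \<longrightarrow>
      (\<forall>c r. c > 0 \<longrightarrow> r = c powr ((qn CARD('n) - 2) / 2) \<longrightarrow>
        (\<exists>W. ctsh_solution (gl ell) \<sigma> \<tau> N (\<lambda>x. c) W
           \<and> (\<forall>x i j. 1 / (2 * N x) * ckill (gl ell) W x i j = c powr qn CARD('n) * \<xi> x * sigflat ell j0 x i j)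
           \<and> gen_g (gl ell) (\<lambda>x. c) = gl (\<lambda>k. r * ell k)
           \<and> gen_K (gl ell) \<sigma> \<tau> N (\<lambda>x. c) W
               = (\<lambda>x i j. if i = j0 \<and> j = j0 then \<tau> x * (r * ell j0)\<^sup>2 else 0)
           \<and> constraints (gen_g (gl ell) (\<lambda>x. c)) (gen_K (gl ell) \<sigma> \<tau> N (\<lambda>x. c) W))))"
proof -
  let ?q = "qn CARD('n)"
  have "\<forall>k. ell k \<noteq> 0" using assms(2) by (metis less_irrefl)
  note solution = ctsh_gl_const_phi_solution[where ?j0.0 = j0,
      OF this assms(3-7) \<tau>s_def[THEN meta_eq_to_obj_eq]]
  show ?thesis
    unfolding \<xi>_def \<sigma>_def \<tau>_def N_def
  proof (intro conjI impI allI, goal_cases)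
    case (1 c r)
    then have pos: "\<mu> / \<tau>s > 0"
      by (auto simp: sgn_if divide_pos_pos divide_neg_neg split: if_splits)
    then have c: "c > 0" using 1 by simp
    have "c powr ?q = \<mu> / \<tau>s"
      using 1 pos qn_gt_2[OF assms(1)] by (simp add: powr_powr abs_of_pos flip: abs_divide)
    then have \<mu>: "\<mu> = c powr ?q * \<tau>s" using 1 by simp
    have "r = (\<mu> / \<tau>s) powr (1 / ?q * ((?q - 2) / 2))"
      using 1 by (simp only: powr_powr)
    then have "r = (\<mu> / \<tau>s) powr (1 / real CARD('n))"
      unfolding qn_conformal_exponent[OF assms(1)] .
    with solution[OF c \<mu> 1(3)] show ?case by (elim exE conjE) (rule exI, intro conjI, assumption+)
  next
    case (2 c r)
    then have "\<mu> = c powr ?q * \<tau>s" by simp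
    with solution[OF 2(2) _ 2(3)] show ?case by blast
  qed
qed

end
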